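(* Let $u\neq v\in V$ and let $\pi_{u,v}$ be the total causal effect of $Y_v$ on $Y_u$ in a linear structural equation model with DAG $G$. Let $\alpha\in(0,1)$ and suppose the data-dependent set of permutations $\hat\Theta(\mathbf Y,\alpha/2)$ satisfies, for every causal ordering $\theta\in\Theta(G)$, $\lim_{n\to\infty}P\big(\theta\in\hat\Theta(\mathbf Y,\alpha/2)\big)\ge 1-\alpha/2$. Suppose that for every $S\subseteq V\setminus\{u,v\}$, $C(S)$ is a data-dependent confidence interval for the coefficient of $Y_v$ in the regression of $Y_u$ onto $Y_{S\cup\{v\}}$ such that, whenever $S$ is a valid adjustment set for the effect of $v$ on $u$, $\lim_{n\to\infty}P(\pi_{u,v}\in C(S))\ge 1-\alpha/2$. Define $\mathcal S=\{\mathrm{pr}_\theta(v):\theta\in\hat\Theta(\mathbf Y,\alpha/2),\ \theta(v)<\theta(u)\}$ and let $\hat C_\alpha=\{0\}\cup\bigcup_{S\in\mathcal S}C(S)$ if $\theta(u)<\theta(v)$ for some $\theta\in\hat\Theta(\mathbf Y,\alpha/2)$, and $\hat C_\alpha=\bigcup_{S\in\mathcal S}C(S)$ otherwise. Then $\lim_{n\to\infty}P(\pi_{u,v}\in\hat C_\alpha)\ge 1-\alpha$.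
   Context: $V=[p]$ and $G=(V,E)$ is a directed acyclic graph; $\mathrm{pa}(v)$, $\mathrm{an}(v)$ denote the parents and ancestors of $v$. The random vector $Y=(Y_1,\dots,Y_p)$ follows a linear structural equation model $Y_v=\sum_{w\in\mathrm{pa}(v)}\beta_{v,w}Y_w+\varepsilon_v$ with mutually independent mean-zero errors; writing $B_{v,w}=\beta_{v,w}$ if $w\in\mathrm{pa}(v)$ and $0$ otherwise, $Y=BY+\varepsilon$, and the total causal effect of $v$ on $u$ is $\pi_{u,v}=\partial E[Y_u\mid\mathrm{do}(Y_v=y)]/\partial y=((I-B)^{-1})_{u,v}$ (in particular $\pi_{u,v}=0$ if $v\notin\mathrm{an}(u)$). A causal ordering of $G$ is a permutation $\theta$ of $V$ such that $\theta(w)<\theta(z)$ only if $z\notin\mathrm{an}(w)$; $\Theta(G)$ is the set of causal orderings, and $\mathrm{pr}_\theta(v)=\{w:\theta(w)<\theta(v)\}$. $\mathbf Y$ denotes a sample of $n$ i.i.d. copies of $Y$, and $\hat\Theta(\mathbf Y,\alpha/2)$ is any set of permutations computed from $\mathbf Y$. A set $S\subseteq V\setminus\{v\}$ is a valid adjustment set for the effect of $v$ on $u$ if the coefficient of $Y_v$ in the population least-squares regression of $Y_u$ on $Y_{S\cup\{v\}}$ equals $\pi_{u,v}$. *)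

theory Defs
  imports "HOL-Probability.Probability"
begin

text \<open>Vertices V are the elements of a finite type 'n (so p = CARD('n)).
  Edges (w,v) in E mean w -> v.\<close>

definition pa :: "('n \<times> 'n) set \<Rightarrow> 'n \<Rightarrow> 'n set" where
  "pa E v = {w. (w, v) \<in> E}"

definition an :: "('n \<times> 'n) set \<Rightarrow> 'n \<Rightarrow> 'n set" where
  "an E v = {w. (w, v) \<in> E\<^sup>+}"

text \<open>B is the SEM coefficient matrix: B v w = beta(v,w) if w in pa(v), else 0.\<close>
definition sem_matrix :: "('n::finite \<times> 'n) set \<Rightarrow> real^'n^'n \<Rightarrow> bool" where
  "sem_matrix E B \<longleftrightarrow> (\<forall>v w. w \<notin> pa E v \<longrightarrow> B $ v $ w = 0)"

definition total_effect :: "real^'n^'n \<Rightarrow> 'n::finite \<Rightarrow> 'n \<Rightarrow> real" where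
  "total_effect B u v = matrix_inv (mat 1 - B) $ u $ v"

definition is_perm :: "('n::finite \<Rightarrow> nat) \<Rightarrow> bool" where
  "is_perm \<theta> \<longleftrightarrow> bij_betw \<theta> (UNIV :: 'n set) {..<CARD('n)}"

definition causal_orderings :: "('n::finite \<times> 'n) set \<Rightarrow> ('n \<Rightarrow> nat) set" where
  "causal_orderings E = {\<theta>. is_perm \<theta> \<and> (\<forall>w z. \<theta> w < \<theta> z \<longrightarrow> z \<notin> an E w)}"

definition prec :: "('n \<Rightarrow> nat) \<Rightarrow> 'n \<Rightarrow> 'n set" where
  "prec \<theta> v = {w. \<theta> w < \<theta> v}"

text \<open>Law of Y = (I - B)^{-1} eps, where eps has independent coordinates eps_w ~ mu w.\<close>
definition obs_law :: "real^'n^'n \<Rightarrow> ('n::finite \<Rightarrow> real measure) \<Rightarrow> ('n \<Rightarrow> real) measure" where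
  "obs_law B \<mu> = distr (PiM UNIV \<mu>) (PiM UNIV (\<lambda>_. borel))
     (\<lambda>e v. \<Sum>w\<in>UNIV. matrix_inv (mat 1 - B) $ v $ w * e w)"

text \<open>Law of a sample of n i.i.d. copies of Y (observation i is omega i, i < n).\<close>
definition sample_law :: "real^'n^'n \<Rightarrow> ('n::finite \<Rightarrow> real measure) \<Rightarrow> nat \<Rightarrow> (nat \<Rightarrow> 'n \<Rightarrow> real) measure" where
  "sample_law B \<mu> n = PiM {..<n} (\<lambda>_. obs_law B \<mu>)"

definition prob_n :: "real^'n^'n \<Rightarrow> ('n::finite \<Rightarrow> real measure) \<Rightarrow> nat \<Rightarrow> ((nat \<Rightarrow> 'n \<Rightarrow> real) \<Rightarrow> bool) \<Rightarrow> real" where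
  "prob_n B \<mu> n P = measure (sample_law B \<mu> n) {\<omega> \<in> space (sample_law B \<mu> n). P \<omega>}"

definition ls_coef :: "('n::finite \<Rightarrow> real) measure \<Rightarrow> 'n \<Rightarrow> 'n set \<Rightarrow> ('n \<Rightarrow> real) \<Rightarrow> bool" where
  "ls_coef L u T b \<longleftrightarrow> (\<forall>t. t \<notin> T \<longrightarrow> b t = 0) \<and>
     (\<forall>c. (\<forall>t. t \<notin> T \<longrightarrow> c t = 0) \<longrightarrow>
        (LINT y|L. (y u - (\<Sum>t\<in>T. b t * y t))\<^sup>2) \<le> (LINT y|L. (y u - (\<Sum>t\<in>T. c t * y t))\<^sup>2))"

definition valid_adjustment :: "real^'n^'n \<Rightarrow> ('n::finite \<Rightarrow> real measure) \<Rightarrow> 'n \<Rightarrow> 'n \<Rightarrow> 'n set \<Rightarrow> bool" where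
  "valid_adjustment B \<mu> u v S \<longleftrightarrow> v \<notin> S \<and>
     (\<exists>b. ls_coef (obs_law B \<mu>) u (S \<union> {v}) b) \<and>
     (\<forall>b. ls_coef (obs_law B \<mu>) u (S \<union> {v}) b \<longrightarrow> b v = total_effect B u v)"

definition adj_sets :: "('n \<Rightarrow> nat) set \<Rightarrow> 'n \<Rightarrow> 'n \<Rightarrow> 'n set set" where
  "adj_sets Th u v = {prec \<theta> v | \<theta>. \<theta> \<in> Th \<and> \<theta> v < \<theta> u}"

definition conf_set :: "('n \<Rightarrow> nat) set \<Rightarrow> ('n set \<Rightarrow> real set) \<Rightarrow> 'n \<Rightarrow> 'n \<Rightarrow> real set" where
  "conf_set Th CS u v =
     (if \<exists>\<theta>\<in>Th. \<theta> u < \<theta> v then {0} else {}) \<union> (\<Union>S\<in>adj_sets Th u v. CS S)"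

end

theory Submission
  imports Defs
begin

text \<open>Fix a causal ordering \<open>\<theta>\<close> of \<open>G\<close>; asymptotically it lies in \<open>Thetahat\<close> with probability at least
  \<open>1 - \<alpha>/2\<close>. If \<open>\<theta> u < \<theta> v\<close>, then \<open>v\<close> is not an ancestor of \<open>u\<close>, so \<open>\<pi>\<^sub>u\<^sub>v = 0\<close>, which the confidence
  set contains as soon as \<open>\<theta>\<close> is in \<open>Thetahat\<close>. Otherwise \<open>pr\<^sub>\<theta>(v)\<close> is a valid adjustment set: \<open>B\<close> is
  strictly lower triangular in the order \<open>\<theta>\<close>, hence \<open>(I - B)\<^sup>-\<^sup>1\<close> is lower triangular too, and since the
  errors are independent and centred, the least-squares regression of \<open>Y\<^sub>u\<close> on the initial segment
  \<open>pr\<^sub>\<theta>(v) \<union> {v}\<close> reduces to a triangular linear system whose solution has \<open>v\<close>-coefficient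
  \<open>((I - B)\<^sup>-\<^sup>1)\<^sub>u\<^sub>v\<close>. The confidence set then contains \<open>C(pr\<^sub>\<theta>(v))\<close> whenever \<open>\<theta>\<close> is in \<open>Thetahat\<close>, and
  the Bonferroni bound \<open>P(A \<inter> B) \<ge> P(A) + P(B) - 1\<close>, passed to the liminf, gives coverage \<open>1 - \<alpha>\<close>.\<close>

lemma finite_acyclic_topological_numbering:
  fixes E :: "('a \<times> 'a) set"
  assumes "finite E" "acyclic E" "finite V"
  shows "\<exists>f. bij_betw f V {..<card V} \<and> (\<forall>w\<in>V. \<forall>z\<in>V. (w, z) \<in> E\<^sup>+ \<longrightarrow> f w < f z)"
  using \<open>finite V\<close>
proof (induction "card V" arbitrary: V)
  case 0
  then show ?case by (auto simp: bij_betw_def)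
next
  case (Suc k)
  have wf: "wf ((E\<^sup>+)\<inverse>)"
    using wf_trancl[OF finite_acyclic_wf_converse[OF assms(1,2)]] by (simp add: trancl_converse)
  from Suc have "V \<noteq> {}" by auto
  then obtain m where "m \<in> V" and sink: "\<And>z. (m, z) \<in> E\<^sup>+ \<Longrightarrow> z \<notin> V"
    using wfE_min[OF wf] by (metis converse_iff ex_in_conv)
  then have "card (V - {m}) = k" using Suc by simp
  then obtain f where f_bij: "bij_betw f (V - {m}) {..<k}"
    and f_mono: "\<forall>w\<in>V - {m}. \<forall>z\<in>V - {m}. (w, z) \<in> E\<^sup>+ \<longrightarrow> f w < f z"
    using Suc by (metis finite_Diff)
  define g where "g = f(m := k)"
  have "bij_betw g (V - {m}) {..<k}"
    using f_bij by (rule bij_betw_cong[THEN iffD1, rotated]) (auto simp: g_def)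
  then have "bij_betw g (V - {m} \<union> {m}) ({..<k} \<union> {g m})"
    by (intro notIn_Un_bij_betw) (auto simp: g_def)
  moreover have "V - {m} \<union> {m} = V" "{..<k} \<union> {g m} = {..<card V}"
    using \<open>m \<in> V\<close> Suc.hyps(2) by (auto simp: g_def)
  ultimately have "bij_betw g V {..<card V}" by simp
  moreover have "g w < g z" if "w \<in> V" "z \<in> V" "(w, z) \<in> E\<^sup>+" for w z
  proof -
    have "w \<noteq> m" using sink that by blast
    then show ?thesis
      using f_mono f_bij that unfolding g_def bij_betw_def by (cases "z = m") auto
  qed
  ultimately show ?case by blast
qed

lemma causal_orderings_nonempty:
  fixes E :: "('n::finite \<times> 'n) set"
  assumes "acyclic E"
  shows "causal_orderings E \<noteq> {}"
proof -
  obtain f where "bij_betw f (UNIV :: 'n set) {..<CARD('n)}"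
    and "\<forall>w z. (w, z) \<in> E\<^sup>+ \<longrightarrow> f w < f z"
    using finite_acyclic_topological_numbering[OF _ assms, of UNIV] by auto
  then have "f \<in> causal_orderings E"
    unfolding causal_orderings_def is_perm_def an_def by (auto dest: less_asym)
  then show ?thesis by blast
qed

lemma causal_ordering_inj: "\<theta> \<in> causal_orderings E \<Longrightarrow> inj \<theta>"
  unfolding causal_orderings_def is_perm_def bij_betw_def by simp

definition strictly_lower_wrt :: "('n \<Rightarrow> nat) \<Rightarrow> 'a::zero^'n^'n \<Rightarrow> bool" where
  "strictly_lower_wrt \<theta> B \<longleftrightarrow> (\<forall>x t. B $ x $ t \<noteq> 0 \<longrightarrow> \<theta> t < \<theta> x)"

lemma sem_matrix_strictly_lower:
  fixes E :: "('n::finite \<times> 'n) set"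
  assumes "acyclic E" "sem_matrix E B" "\<theta> \<in> causal_orderings E"
  shows "strictly_lower_wrt \<theta> B"
  unfolding strictly_lower_wrt_def
proof (intro allI impI)
  fix x t assume "B $ x $ t \<noteq> 0"
  then have "(t, x) \<in> E" using assms(2) unfolding sem_matrix_def pa_def by auto
  then have "t \<noteq> x" and "\<not> \<theta> x < \<theta> t"
    using assms(1,3) unfolding acyclic_def causal_orderings_def an_def by auto
  with causal_ordering_inj[OF assms(3)] show "\<theta> t < \<theta> x"
    by (metis injD linorder_neqE_nat)
qed

lemma matrix_inv_left:
  fixes A :: "'a::semiring_1^'n^'n"
  shows "invertible A \<Longrightarrow> matrix_inv A ** A = mat 1"
  unfolding invertible_def matrix_inv_def by (metis (mono_tags, lifting) someI_ex)

lemma matrix_inv_right: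
  fixes A :: "'a::semiring_1^'n^'n"
  shows "invertible A \<Longrightarrow> A ** matrix_inv A = mat 1"
  unfolding invertible_def matrix_inv_def by (metis (mono_tags, lifting) someI_ex)

lemma strictly_lower_invertible:
  fixes B :: "'a::field^'n::finite^'n"
  assumes lower: "strictly_lower_wrt \<theta> B"
  shows "invertible (mat 1 - B)"
  unfolding invertible_left_inverse matrix_left_invertible_ker
proof (intro allI impI)
  fix y assume "(mat 1 - B) *v y = 0"
  then have "y = B *v y" by (simp add: matrix_vector_mult_diff_rdistrib)
  have "y $ t = 0" for t
  proof (induction t rule: measure_induct_rule[of \<theta>])
    case (less t)
    have "y $ t = (B *v y) $ t"
      using \<open>y = B *v y\<close> by (rule arg_cong)
    also have "\<dots> = (\<Sum>s\<in>UNIV. B $ t $ s * y $ s)"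
      by (simp add: matrix_vector_mult_def)
    also have "\<dots> = 0"
    proof (rule sum.neutral, intro ballI)
      fix s
      show "B $ t $ s * y $ s = 0"
      proof (cases "B $ t $ s = 0")
        case False
        then have "\<theta> s < \<theta> t" using lower unfolding strictly_lower_wrt_def by blast
        then show ?thesis using less by simp
      qed simp
    qed
    finally show ?case .
  qed
  then show "y = 0" by (simp add: vec_eq_iff)
qed

lemma mat_1_minus_matrix_mul:
  fixes A B :: "'a::ring_1^'n::finite^'n"
  shows "(mat 1 - B) ** A = A - B ** A"
  by (simp add: vec_eq_iff matrix_matrix_mult_def mat_def left_diff_distrib sum_subtractf
      if_distrib[of "\<lambda>x. x * _"] cong: if_cong)

lemma strictly_lower_inverse_entry_zero:
  fixes B :: "'a::field^'n::finite^'n"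
  assumes lower: "strictly_lower_wrt \<theta> B" and "\<theta> t < \<theta> w"
  shows "matrix_inv (mat 1 - B) $ t $ w = 0"
  using \<open>\<theta> t < \<theta> w\<close>
proof (induction t rule: measure_induct_rule[of \<theta>])
  case (less t)
  let ?A = "matrix_inv (mat 1 - B)"
  have "?A - B ** ?A = mat 1"
    using matrix_inv_right[OF strictly_lower_invertible[OF lower]]
    by (simp add: mat_1_minus_matrix_mul)
  then have "?A = mat 1 + B ** ?A"
    by (simp only: diff_eq_eq)
  then have "?A $ t $ w = (mat 1 + B ** ?A) $ t $ w"
    by (rule arg_cong)
  also have "\<dots> = (\<Sum>k\<in>UNIV. B $ t $ k * ?A $ k $ w)"
    using less.prems by (auto simp: mat_def matrix_matrix_mult_def)
  also have "\<dots> = 0"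
  proof (rule sum.neutral, intro ballI)
    fix k
    show "B $ t $ k * ?A $ k $ w = 0"
    proof (cases "B $ t $ k = 0")
      case False
      then have "\<theta> k < \<theta> t" using lower unfolding strictly_lower_wrt_def by blast
      then have "?A $ k $ w = 0" using less by (meson less_trans)
      then show ?thesis by simp
    qed simp
  qed
  finally show ?case .
qed

lemma block_system_solvable:
  fixes A M :: "'a::comm_ring_1^'n::finite^'n"
  assumes MA: "M ** A = mat 1" and M_zero: "\<And>x t. x \<in> T \<Longrightarrow> t \<notin> T \<Longrightarrow> M $ x $ t = 0"
  shows "\<exists>a. (\<forall>t. t \<notin> T \<longrightarrow> a t = 0) \<and> (\<forall>w\<in>T. (\<Sum>t\<in>T. a t * A $ t $ w) = f w)"
proof (intro exI conjI allI impI ballI)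
  define a where "a t = (if t \<in> T then (\<Sum>x\<in>T. f x * M $ x $ t) else 0)" for t
  show "a t = 0" if "t \<notin> T" for t
    using that by (simp add: a_def)
  fix w assume "w \<in> T"
  have row: "(\<Sum>t\<in>T. M $ x $ t * A $ t $ w) = (if x = w then 1 else 0)" if "x \<in> T" for x
  proof -
    have "(\<Sum>t\<in>T. M $ x $ t * A $ t $ w) = (M ** A) $ x $ w"
      unfolding matrix_matrix_mult_def using M_zero[OF that]
      by (simp add: sum.mono_neutral_left)
    then show ?thesis by (simp add: MA mat_def)
  qed
  have "(\<Sum>t\<in>T. a t * A $ t $ w) = (\<Sum>t\<in>T. \<Sum>x\<in>T. f x * M $ x $ t * A $ t $ w)"
    by (simp add: a_def sum_distrib_right)
  also have "\<dots> = (\<Sum>x\<in>T. f x * (\<Sum>t\<in>T. M $ x $ t * A $ t $ w))"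
    by (subst sum.swap) (simp add: sum_distrib_left mult.assoc)
  also have "\<dots> = f w"
    using \<open>w \<in> T\<close> by (simp add: row if_distrib[of "\<lambda>y. _ * y"] cong: if_cong)
  finally show "(\<Sum>t\<in>T. a t * A $ t $ w) = f w" .
qed

lemma block_system_unique:
  fixes A M :: "'a::comm_ring_1^'n::finite^'n"
  assumes AM: "A ** M = mat 1" and A_zero: "\<And>t w. t \<in> T \<Longrightarrow> w \<notin> T \<Longrightarrow> A $ t $ w = 0"
    and solves: "\<And>w. w \<in> T \<Longrightarrow> (\<Sum>t\<in>T. b t * A $ t $ w) = f w" and "s \<in> T"
  shows "b s = (\<Sum>w\<in>T. f w * M $ w $ s)"
proof -
  have row: "(\<Sum>w\<in>T. A $ t $ w * M $ w $ s) = (if t = s then 1 else 0)" if "t \<in> T" for t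
  proof -
    have "(\<Sum>w\<in>T. A $ t $ w * M $ w $ s) = (A ** M) $ t $ s"
      unfolding matrix_matrix_mult_def using A_zero[OF that]
      by (simp add: sum.mono_neutral_left)
    then show ?thesis by (simp add: AM mat_def)
  qed
  have "(\<Sum>w\<in>T. f w * M $ w $ s) = (\<Sum>w\<in>T. (\<Sum>t\<in>T. b t * A $ t $ w) * M $ w $ s)"
    by (simp add: solves)
  also have "\<dots> = (\<Sum>w\<in>T. \<Sum>t\<in>T. b t * A $ t $ w * M $ w $ s)"
    by (simp add: sum_distrib_right)
  also have "\<dots> = (\<Sum>t\<in>T. b t * (\<Sum>w\<in>T. A $ t $ w * M $ w $ s))"
    by (subst sum.swap) (simp add: sum_distrib_left mult.assoc)
  also have "\<dots> = b s"
    using \<open>s \<in> T\<close> by (simp add: row if_distrib[of "\<lambda>y. _ * y"] cong: if_cong)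
  finally show ?thesis by simp
qed

lemma (in prob_space) prob_Int_lower_bound:
  assumes "A \<in> events" "B \<in> events"
  shows "prob A + prob B - 1 \<le> prob (A \<inter> B)"
proof -
  have "prob A + prob (B - A) = prob (A \<union> B)"
    using finite_measure_Union'[OF assms] by simp
  moreover have "prob (B - A) = prob B - prob (A \<inter> B)"
    using finite_measure_Diff'[OF assms(2,1)] by (simp add: Int_commute)
  ultimately show ?thesis using prob_le_1[of "A \<union> B"] by linarith
qed

lemma Bonferroni_le_Liminf:
  fixes f g h :: "'a \<Rightarrow> real"
  assumes "ereal a \<le> Liminf F (\<lambda>n. ereal (f n))" "ereal b \<le> Liminf F (\<lambda>n. ereal (g n))"
    and "\<And>n. f n + g n - 1 \<le> h n"
  shows "ereal (a + b - 1) \<le> Liminf F (\<lambda>n. ereal (h n))"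
  unfolding le_Liminf_iff
proof (intro allI impI)
  fix y assume y: "y < ereal (a + b - 1)"
  show "\<forall>\<^sub>F n in F. y < ereal (h n)"
  proof (cases y)
    case (real r)
    define d where "d = (a + b - 1 - r) / 2"
    have "0 < d" using y real d_def by simp
    then have "\<forall>\<^sub>F n in F. ereal (a - d) < ereal (f n)" "\<forall>\<^sub>F n in F. ereal (b - d) < ereal (g n)"
      using assms(1)[unfolded le_Liminf_iff, rule_format, of "ereal (a - d)"]
        assms(2)[unfolded le_Liminf_iff, rule_format, of "ereal (b - d)"]
      by simp_all
    then show ?thesis
    proof eventually_elim
      case (elim n)
      have "a + b - 1 - r = 2 * d" by (simp add: d_def)
      then show ?case using elim assms(3)[of n] real by simp
    qed
  qed (use y in simp_all)
qed

locale centered_errors =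
  fixes \<mu> :: "'n::finite \<Rightarrow> real measure"
  assumes prob_space_err: "\<And>w. prob_space (\<mu> w)"
    and sets_err: "\<And>w. sets (\<mu> w) = sets borel"
    and integrable_err_square: "\<And>w. integrable (\<mu> w) (\<lambda>x. x\<^sup>2)"
    and err_mean_zero: "\<And>w. (LINT x|\<mu> w. x) = 0"
begin

sublocale P: product_prob_space \<mu> UNIV
  by (simp add: product_prob_space_def product_prob_space_axioms_def product_sigma_finite_def
      prob_space_imp_sigma_finite prob_space_err)

lemma measurable_err_component [measurable]: "(\<lambda>e. e w) \<in> borel_measurable (PiM UNIV \<mu>)"
  using measurable_component_singleton[of w UNIV \<mu>]
  by (simp add: measurable_cong_sets[OF refl sets_err])

lemma integrable_err: "integrable (\<mu> w) (\<lambda>x. x)"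
  by (rule P.M.square_integrable_imp_integrable[OF _ integrable_err_square])
    (simp add: measurable_ident_sets[OF sets_err])

lemma integrable_err_mult: "integrable (PiM UNIV \<mu>) (\<lambda>e. e w * e w')"
  and integral_err_mult:
    "(LINT e|PiM UNIV \<mu>. e w * e w') = (if w = w' then (LINT x|\<mu> w. x\<^sup>2) else 0)"
proof -
  define f where "f i x = (if i = w then x else 1) * (if i = w' then x else (1::real))" for i x
  have f_integrable: "integrable (\<mu> i) (f i)" for i
  proof -
    have f_cases: "f i = (if i = w \<and> i = w' then (\<lambda>x. x\<^sup>2)
        else if i = w \<or> i = w' then (\<lambda>x. x) else (\<lambda>x. 1))"
      by (auto simp: f_def fun_eq_iff power2_eq_square)
    show ?thesis
      unfolding f_cases using integrable_err integrable_err_square P.M.integrable_const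
      by (simp only: if_split) blast
  qed
  have prod_f: "(\<Prod>i\<in>UNIV. f i (e i)) = e w * e w'" for e
    by (simp add: f_def prod.distrib prod.delta)
  show "integrable (PiM UNIV \<mu>) (\<lambda>e. e w * e w')"
    using P.product_integrable_prod[of UNIV f] f_integrable by (simp add: prod_f)
  have "(LINT e|PiM UNIV \<mu>. e w * e w') = (\<Prod>i\<in>UNIV. LINT x|\<mu> i. f i x)"
    using P.product_integral_prod[of UNIV f] f_integrable by (simp add: prod_f)
  also have "\<dots> = (if w = w' then (LINT x|\<mu> w. x\<^sup>2) else 0)"
  proof (cases "w = w'")
    case True
    then have "(LINT x|\<mu> i. f i x) = (if i = w then (LINT x|\<mu> w. x\<^sup>2) else 1)" for i
      using P.M.prob_space by (auto simp: f_def power2_eq_square)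
    with True show ?thesis by (simp add: prod.delta)
  next
    case False
    then have "(LINT x|\<mu> w. f w x) = 0" by (simp add: f_def err_mean_zero)
    with False show ?thesis by (metis finite_class.finite_UNIV UNIV_I prod_zero)
  qed
  finally show "(LINT e|PiM UNIV \<mu>. e w * e w') = (if w = w' then (LINT x|\<mu> w. x\<^sup>2) else 0)" .
qed

lemma integral_err_lincomb_square:
  "(LINT e|PiM UNIV \<mu>. (\<Sum>w\<in>UNIV. g w * e w)\<^sup>2) = (\<Sum>w\<in>UNIV. (g w)\<^sup>2 * (LINT x|\<mu> w. x\<^sup>2))"
proof -
  have expand: "(\<Sum>w\<in>UNIV. g w * e w)\<^sup>2 = (\<Sum>w\<in>UNIV. \<Sum>w'\<in>UNIV. (g w * g w') * (e w * e w'))"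
    for e :: "'n \<Rightarrow> real"
    by (simp add: power2_eq_square sum_product algebra_simps)
  have "(LINT e|PiM UNIV \<mu>. (\<Sum>w\<in>UNIV. \<Sum>w'\<in>UNIV. (g w * g w') * (e w * e w')))
      = (\<Sum>w\<in>UNIV. \<Sum>w'\<in>UNIV. (g w * g w') * (LINT e|PiM UNIV \<mu>. e w * e w'))"
    using integrable_err_mult
    by (simp add: Bochner_Integration.integral_sum Bochner_Integration.integrable_sum)
  also have "\<dots> = (\<Sum>w\<in>UNIV. \<Sum>w'\<in>UNIV. (g w * g w') * (if w = w' then (LINT x|\<mu> w. x\<^sup>2) else 0))"
    by (simp only: integral_err_mult)
  also have "\<dots> = (\<Sum>w\<in>UNIV. (g w)\<^sup>2 * (LINT x|\<mu> w. x\<^sup>2))"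
    by (simp add: power2_eq_square if_distrib cong: if_cong)
  finally show ?thesis by (simp only: expand)
qed

lemma integral_obs_law_residual_square:
  "(LINT y|obs_law B \<mu>. (y u - (\<Sum>t\<in>T. c t * y t))\<^sup>2) =
    (\<Sum>w\<in>UNIV. (matrix_inv (mat 1 - B) $ u $ w - (\<Sum>t\<in>T. c t * matrix_inv (mat 1 - B) $ t $ w))\<^sup>2
      * (LINT x|\<mu> w. x\<^sup>2))"
proof -
  define A where "A = matrix_inv (mat 1 - B)"
  define F where "F e v = (\<Sum>w\<in>UNIV. A $ v $ w * e w)" for e :: "'n \<Rightarrow> real" and v
  have F_measurable: "F \<in> measurable (PiM UNIV \<mu>) (PiM UNIV (\<lambda>_. borel))"
    unfolding F_def by (rule measurable_PiM_single') (auto simp: space_PiM)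
  have "(\<Sum>t\<in>T. c t * F e t) = (\<Sum>w\<in>UNIV. (\<Sum>t\<in>T. c t * A $ t $ w) * e w)" for e
    unfolding F_def by (simp add: sum_distrib_left sum_distrib_right mult.assoc sum.swap[of _ T])
  then have residual:
    "F e u - (\<Sum>t\<in>T. c t * F e t) = (\<Sum>w\<in>UNIV. (A $ u $ w - (\<Sum>t\<in>T. c t * A $ t $ w)) * e w)" for e
    unfolding F_def by (simp add: left_diff_distrib sum_subtractf)
  have "(LINT y|obs_law B \<mu>. (y u - (\<Sum>t\<in>T. c t * y t))\<^sup>2)
      = (LINT e|PiM UNIV \<mu>. (F e u - (\<Sum>t\<in>T. c t * F e t))\<^sup>2)"
    unfolding obs_law_def F_def A_def by (rule integral_distr[OF F_measurable[unfolded F_def A_def]]) simp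
  also have "\<dots> = (\<Sum>w\<in>UNIV. (A $ u $ w - (\<Sum>t\<in>T. c t * A $ t $ w))\<^sup>2 * (LINT x|\<mu> w. x\<^sup>2))"
    unfolding residual by (rule integral_err_lincomb_square)
  finally show ?thesis unfolding A_def .
qed

lemma prob_space_obs_law: "prob_space (obs_law B \<mu>)"
proof -
  have "(\<lambda>e v. \<Sum>w\<in>UNIV. matrix_inv (mat 1 - B) $ v $ w * e w)
      \<in> measurable (PiM UNIV \<mu>) (PiM UNIV (\<lambda>_. borel))"
    by (rule measurable_PiM_single') (auto simp: space_PiM)
  then show ?thesis
    unfolding obs_law_def by (rule P.prob_space_distr)
qed

lemma prob_space_sample_law: "prob_space (sample_law B \<mu> n)"
  unfolding sample_law_def by (intro prob_space_PiM prob_space_obs_law)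

text \<open>Off \<open>T\<close> the residuals do not depend on the candidate, so least squares means solving the
  equations on \<open>T\<close> exactly.\<close>
lemma ls_coef_obs_law_iff:
  fixes B :: "real^'n^'n"
  defines "A \<equiv> matrix_inv (mat 1 - B)"
  assumes A_zero: "\<And>t w. t \<in> T \<Longrightarrow> w \<notin> T \<Longrightarrow> A $ t $ w = 0"
    and solvable: "\<exists>a. (\<forall>t. t \<notin> T \<longrightarrow> a t = 0) \<and> (\<forall>w\<in>T. (\<Sum>t\<in>T. a t * A $ t $ w) = A $ u $ w)"
    and var_pos: "\<And>w. 0 < (LINT x|\<mu> w. x\<^sup>2)"
  shows "ls_coef (obs_law B \<mu>) u T b \<longleftrightarrow>
    (\<forall>t. t \<notin> T \<longrightarrow> b t = 0) \<and> (\<forall>w\<in>T. (\<Sum>t\<in>T. b t * A $ t $ w) = A $ u $ w)"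
proof -
  define \<sigma> where "\<sigma> w = (LINT x|\<mu> w. x\<^sup>2)" for w
  define mse where "mse c = (LINT y|obs_law B \<mu>. (y u - (\<Sum>t\<in>T. c t * y t))\<^sup>2)" for c
  define K where "K = (\<Sum>w\<in>-T. (A $ u $ w)\<^sup>2 * \<sigma> w)"
  have mse_split: "mse c = K + (\<Sum>w\<in>T. (A $ u $ w - (\<Sum>t\<in>T. c t * A $ t $ w))\<^sup>2 * \<sigma> w)" for c
  proof -
    have "mse c = (\<Sum>w\<in>UNIV. (A $ u $ w - (\<Sum>t\<in>T. c t * A $ t $ w))\<^sup>2 * \<sigma> w)"
      unfolding mse_def \<sigma>_def A_def by (rule integral_obs_law_residual_square)
    also have "\<dots> = (\<Sum>w\<in>-T. (A $ u $ w - (\<Sum>t\<in>T. c t * A $ t $ w))\<^sup>2 * \<sigma> w)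
        + (\<Sum>w\<in>T. (A $ u $ w - (\<Sum>t\<in>T. c t * A $ t $ w))\<^sup>2 * \<sigma> w)"
      by (subst sum.union_disjoint[symmetric]) (simp_all add: Compl_partition2)
    also have "(\<Sum>w\<in>-T. (A $ u $ w - (\<Sum>t\<in>T. c t * A $ t $ w))\<^sup>2 * \<sigma> w) = K"
      unfolding K_def by (rule sum.cong) (simp_all add: A_zero)
    finally show ?thesis .
  qed
  have mse_ge: "K \<le> mse c" for c
    unfolding mse_split using var_pos by (simp add: \<sigma>_def sum_nonneg)
  have mse_eq_K: "mse c = K \<longleftrightarrow> (\<forall>w\<in>T. (\<Sum>t\<in>T. c t * A $ t $ w) = A $ u $ w)" for c
  proof -
    have "mse c = K \<longleftrightarrow> (\<forall>w\<in>T. (A $ u $ w - (\<Sum>t\<in>T. c t * A $ t $ w))\<^sup>2 * \<sigma> w = 0)"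
      unfolding mse_split using var_pos by (simp add: \<sigma>_def sum_nonneg_eq_0_iff)
    also have "\<dots> \<longleftrightarrow> (\<forall>w\<in>T. (\<Sum>t\<in>T. c t * A $ t $ w) = A $ u $ w)"
      using var_pos by (auto simp: \<sigma>_def less_le)
    finally show ?thesis .
  qed
  obtain a where a_zero: "\<forall>t. t \<notin> T \<longrightarrow> a t = 0" and "mse a = K"
    using solvable mse_eq_K by blast
  have "ls_coef (obs_law B \<mu>) u T b \<longleftrightarrow> (\<forall>t. t \<notin> T \<longrightarrow> b t = 0) \<and> mse b = K"
  proof
    assume "ls_coef (obs_law B \<mu>) u T b"
    then have "\<forall>t. t \<notin> T \<longrightarrow> b t = 0" and "mse b \<le> mse a"
      unfolding ls_coef_def mse_def[symmetric] using a_zero by auto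
    then show "(\<forall>t. t \<notin> T \<longrightarrow> b t = 0) \<and> mse b = K"
      using mse_ge[of b] \<open>mse a = K\<close> by simp
  next
    assume "(\<forall>t. t \<notin> T \<longrightarrow> b t = 0) \<and> mse b = K"
    then show "ls_coef (obs_law B \<mu>) u T b"
      unfolding ls_coef_def mse_def[symmetric] using mse_ge by simp
  qed
  then show ?thesis by (simp add: mse_eq_K)
qed

lemma valid_adjustment_prec:
  fixes B :: "real^'n^'n"
  assumes lower: "strictly_lower_wrt \<theta> B" and "inj \<theta>"
    and var_pos: "\<And>w. 0 < (LINT x|\<mu> w. x\<^sup>2)"
  shows "valid_adjustment B \<mu> u v (prec \<theta> v)"
proof -
  define M where "M = mat 1 - B"
  define A where "A = matrix_inv M"
  define T where "T = prec \<theta> v \<union> {v}"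
  have T_iff: "t \<in> T \<longleftrightarrow> \<theta> t \<le> \<theta> v" for t
    using \<open>inj \<theta>\<close> unfolding T_def prec_def by (auto dest: injD)
  have B_zero: "B $ x $ t = 0" if "\<theta> x \<le> \<theta> t" for x t
    using lower that unfolding strictly_lower_wrt_def by force
  have AM: "A ** M = mat 1" and MA: "M ** A = mat 1"
    unfolding A_def M_def
    using matrix_inv_left matrix_inv_right strictly_lower_invertible[OF lower] by blast+
  have A_zero: "A $ t $ w = 0" if "t \<in> T" "w \<notin> T" for t w
    unfolding A_def M_def using that T_iff
    by (intro strictly_lower_inverse_entry_zero[OF lower]) simp
  have M_zero: "M $ x $ t = 0" if "x \<in> T" "t \<notin> T" for x t
    using that T_iff B_zero[of x t] by (auto simp: M_def mat_def)
  have solvable: "\<exists>a. (\<forall>t. t \<notin> T \<longrightarrow> a t = 0) \<and> (\<forall>w\<in>T. (\<Sum>t\<in>T. a t * A $ t $ w) = A $ u $ w)"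
    by (rule block_system_solvable[OF MA M_zero])
  have ls_iff: "ls_coef (obs_law B \<mu>) u T b \<longleftrightarrow>
      (\<forall>t. t \<notin> T \<longrightarrow> b t = 0) \<and> (\<forall>w\<in>T. (\<Sum>t\<in>T. b t * A $ t $ w) = A $ u $ w)" for b
    using ls_coef_obs_law_iff[OF A_zero[unfolded A_def M_def] solvable[unfolded A_def M_def] var_pos]
    unfolding A_def M_def .
  have "b v = total_effect B u v" if "ls_coef (obs_law B \<mu>) u T b" for b
  proof -
    have "b v = (\<Sum>w\<in>T. A $ u $ w * M $ w $ v)"
      using that unfolding ls_iff by (intro block_system_unique[OF AM A_zero]) (simp_all add: T_iff)
    also have "\<dots> = (\<Sum>w\<in>T. A $ u $ w * (if w = v then 1 else 0))"
      using T_iff B_zero by (intro sum.cong) (auto simp: M_def mat_def)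
    also have "\<dots> = A $ u $ v"
      by (simp add: T_iff if_distrib[of "\<lambda>y. _ * y"] cong: if_cong)
    finally show ?thesis unfolding total_effect_def A_def M_def .
  qed
  moreover have "\<exists>b. ls_coef (obs_law B \<mu>) u T b"
    using solvable by (simp add: ls_iff)
  ultimately show ?thesis
    unfolding valid_adjustment_def T_def[symmetric] by (simp add: prec_def)
qed

lemma prob_n_mono:
  assumes "{\<omega> \<in> space (sample_law B \<mu> n). Q \<omega>} \<in> sets (sample_law B \<mu> n)"
    and "\<And>\<omega>. P \<omega> \<Longrightarrow> Q \<omega>"
  shows "prob_n B \<mu> n P \<le> prob_n B \<mu> n Q"
proof -
  interpret prob_space "sample_law B \<mu> n" by (rule prob_space_sample_law)
  show ?thesis
    unfolding prob_n_def using assms by (intro finite_measure_mono) auto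
qed

lemma prob_n_conj_lower_bound:
  assumes "{\<omega> \<in> space (sample_law B \<mu> n). P \<omega>} \<in> sets (sample_law B \<mu> n)"
    and "{\<omega> \<in> space (sample_law B \<mu> n). Q \<omega>} \<in> sets (sample_law B \<mu> n)"
  shows "prob_n B \<mu> n P + prob_n B \<mu> n Q - 1 \<le> prob_n B \<mu> n (\<lambda>\<omega>. P \<omega> \<and> Q \<omega>)"
proof -
  interpret prob_space "sample_law B \<mu> n" by (rule prob_space_sample_law)
  have "{\<omega> \<in> space (sample_law B \<mu> n). P \<omega> \<and> Q \<omega>}
      = {\<omega> \<in> space (sample_law B \<mu> n). P \<omega>} \<inter> {\<omega> \<in> space (sample_law B \<mu> n). Q \<omega>}"
    by auto
  then show ?thesis
    unfolding prob_n_def using prob_Int_lower_bound[OF assms] by simp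
qed

lemma Liminf_prob_n_mono:
  assumes "\<And>n. {\<omega> \<in> space (sample_law B \<mu> n). Q n \<omega>} \<in> sets (sample_law B \<mu> n)"
    and "\<And>n \<omega>. P n \<omega> \<Longrightarrow> Q n \<omega>"
  shows "Liminf F (\<lambda>n. ereal (prob_n B \<mu> n (P n))) \<le> Liminf F (\<lambda>n. ereal (prob_n B \<mu> n (Q n)))"
  using assms by (intro Liminf_mono always_eventually allI) (simp add: prob_n_mono)

lemma Liminf_prob_n_conj:
  assumes "ereal a \<le> Liminf F (\<lambda>n. ereal (prob_n B \<mu> n (P n)))"
    and "ereal b \<le> Liminf F (\<lambda>n. ereal (prob_n B \<mu> n (Q n)))"
    and "\<And>n. {\<omega> \<in> space (sample_law B \<mu> n). P n \<omega>} \<in> sets (sample_law B \<mu> n)"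
    and "\<And>n. {\<omega> \<in> space (sample_law B \<mu> n). Q n \<omega>} \<in> sets (sample_law B \<mu> n)"
    and "\<And>n. {\<omega> \<in> space (sample_law B \<mu> n). R n \<omega>} \<in> sets (sample_law B \<mu> n)"
    and "\<And>n \<omega>. P n \<omega> \<Longrightarrow> Q n \<omega> \<Longrightarrow> R n \<omega>"
  shows "ereal (a + b - 1) \<le> Liminf F (\<lambda>n. ereal (prob_n B \<mu> n (R n)))"
proof (rule Bonferroni_le_Liminf[OF assms(1,2)])
  fix n
  have "prob_n B \<mu> n (P n) + prob_n B \<mu> n (Q n) - 1 \<le> prob_n B \<mu> n (\<lambda>\<omega>. P n \<omega> \<and> Q n \<omega>)"
    using assms(3,4) by (rule prob_n_conj_lower_bound)
  also have "\<dots> \<le> prob_n B \<mu> n (R n)"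
    using assms(6) by (intro prob_n_mono[OF assms(5)]) blast
  finally show "prob_n B \<mu> n (P n) + prob_n B \<mu> n (Q n) - 1 \<le> prob_n B \<mu> n (R n)" .
qed

end

lemma mem_conf_set_iff:
  "x \<in> conf_set Th CS u v \<longleftrightarrow>
    (\<exists>\<theta>\<in>Th. \<theta> v < \<theta> u \<and> x \<in> CS (prec \<theta> v) \<or> \<theta> u < \<theta> v \<and> x = 0)"
  unfolding conf_set_def adj_sets_def by auto

lemma finite_perms: "finite {\<theta> :: 'n::finite \<Rightarrow> nat. is_perm \<theta>}"
proof (rule finite_subset)
  show "{\<theta> :: 'n \<Rightarrow> nat. is_perm \<theta>} \<subseteq> PiE UNIV (\<lambda>_. {..<CARD('n)})"
    unfolding is_perm_def bij_betw_def by auto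
qed (simp add: finite_PiE)

text \<open>Only finitely many orderings can occur, so the event is a finite union of measurable sets.\<close>
lemma conf_set_event_measurable:
  fixes Th :: "'b \<Rightarrow> ('n::finite \<Rightarrow> nat) set"
  assumes perms: "\<And>\<omega>. Th \<omega> \<subseteq> {\<theta>. is_perm \<theta>}"
    and meas_Th: "\<And>\<theta>. {\<omega> \<in> space M. \<theta> \<in> Th \<omega>} \<in> sets M"
    and meas_C: "\<And>S. S \<subseteq> UNIV - {u, v} \<Longrightarrow> {\<omega> \<in> space M. x \<in> C S \<omega>} \<in> sets M"
  shows "{\<omega> \<in> space M. x \<in> conf_set (Th \<omega>) (\<lambda>S. C S \<omega>) u v} \<in> sets M"
proof -
  have "{\<omega> \<in> space M. x \<in> conf_set (Th \<omega>) (\<lambda>S. C S \<omega>) u v} =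
      {\<omega> \<in> space M. \<exists>\<theta>\<in>{\<theta>. is_perm \<theta>}.
        \<theta> \<in> Th \<omega> \<and> (\<theta> v < \<theta> u \<and> x \<in> C (prec \<theta> v) \<omega> \<or> \<theta> u < \<theta> v \<and> x = 0)}"
    using perms unfolding mem_conf_set_iff by blast
  also have "\<dots> \<in> sets M"
  proof (rule sets.sets_Collect_finite_Ex[OF _ finite_perms])
    fix \<theta> :: "'n \<Rightarrow> nat"
    have "prec \<theta> v \<subseteq> UNIV - {u, v}" if "\<theta> v < \<theta> u"
      using that unfolding prec_def by auto
    then show "{\<omega> \<in> space M. \<theta> \<in> Th \<omega> \<and> (\<theta> v < \<theta> u \<and> x \<in> C (prec \<theta> v) \<omega> \<or> \<theta> u < \<theta> v \<and> x = 0)}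
        \<in> sets M"
      using meas_Th meas_C by (cases "\<theta> v < \<theta> u") auto
  qed
  finally show ?thesis .
qed

theorem lemma1:
  fixes E :: "('n::finite \<times> 'n) set" and B :: "real^'n^'n"
    and \<mu> :: "'n \<Rightarrow> real measure" and u v :: 'n and \<alpha> :: real
    and Thetahat :: "nat \<Rightarrow> (nat \<Rightarrow> 'n \<Rightarrow> real) \<Rightarrow> ('n \<Rightarrow> nat) set"
    and C :: "nat \<Rightarrow> 'n set \<Rightarrow> (nat \<Rightarrow> 'n \<Rightarrow> real) \<Rightarrow> real set"
  assumes dag: "acyclic E"
    and sem: "sem_matrix E B"
    and err_prob: "\<forall>w. prob_space (\<mu> w)"
    and err_borel: "\<forall>w. sets (\<mu> w) = sets borel"
    and err_sq: "\<forall>w. integrable (\<mu> w) (\<lambda>x. x\<^sup>2)"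
    and err_mean: "\<forall>w. (LINT x|\<mu> w. x) = 0"
    and err_var: "\<forall>w. 0 < (LINT x|\<mu> w. x\<^sup>2)"
    and uv: "u \<noteq> v"
    and alpha: "0 < \<alpha>" "\<alpha> < 1"
    and perms: "\<forall>n \<omega>. Thetahat n \<omega> \<subseteq> {\<theta>. is_perm \<theta>}"
    and meas_Theta: "\<forall>n \<theta>. {\<omega> \<in> space (sample_law B \<mu> n). \<theta> \<in> Thetahat n \<omega>} \<in> sets (sample_law B \<mu> n)"
    and meas_C: "\<forall>n S. S \<subseteq> UNIV - {u, v} \<longrightarrow>
       {\<omega> \<in> space (sample_law B \<mu> n). total_effect B u v \<in> C n S \<omega>} \<in> sets (sample_law B \<mu> n)"
    and Theta_cov: "\<forall>\<theta>\<in>causal_orderings E.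
       Liminf sequentially (\<lambda>n. ereal (prob_n B \<mu> n (\<lambda>\<omega>. \<theta> \<in> Thetahat n \<omega>))) \<ge> ereal (1 - \<alpha> / 2)"
    and C_cov: "\<forall>S. S \<subseteq> UNIV - {u, v} \<and> valid_adjustment B \<mu> u v S \<longrightarrow>
       Liminf sequentially (\<lambda>n. ereal (prob_n B \<mu> n (\<lambda>\<omega>. total_effect B u v \<in> C n S \<omega>))) \<ge> ereal (1 - \<alpha> / 2)"
  shows "Liminf sequentially (\<lambda>n. ereal (prob_n B \<mu> n
           (\<lambda>\<omega>. total_effect B u v \<in> conf_set (Thetahat n \<omega>) (\<lambda>S. C n S \<omega>) u v)))
         \<ge> ereal (1 - \<alpha>)"
proof -
  have errors: "centered_errors \<mu>"
    using err_prob err_borel err_sq err_mean by (simp add: centered_errors_def)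
  obtain \<theta> where \<theta>: "\<theta> \<in> causal_orderings E"
    using causal_orderings_nonempty[OF dag] by blast
  note lower = sem_matrix_strictly_lower[OF dag sem \<theta>]
  let ?\<pi> = "total_effect B u v"
  let ?ordered = "\<lambda>n \<omega>. \<theta> \<in> Thetahat n \<omega>"
  let ?covered = "\<lambda>n \<omega>. ?\<pi> \<in> conf_set (Thetahat n \<omega>) (\<lambda>S. C n S \<omega>) u v"
  have covered_measurable:
    "{\<omega> \<in> space (sample_law B \<mu> n). ?covered n \<omega>} \<in> sets (sample_law B \<mu> n)" for n
    by (rule conf_set_event_measurable) (simp_all add: perms meas_Theta meas_C)
  have \<theta>_cov: "ereal (1 - \<alpha> / 2) \<le> Liminf sequentially (\<lambda>n. ereal (prob_n B \<mu> n (?ordered n)))"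
    using Theta_cov \<theta> by simp
  consider "\<theta> u < \<theta> v" | "\<theta> v < \<theta> u"
    using causal_ordering_inj[OF \<theta>] uv by (metis injD linorder_neqE_nat)
  then show ?thesis
  proof cases
    case 1
    then have "?\<pi> = 0"
      unfolding total_effect_def by (rule strictly_lower_inverse_entry_zero[OF lower])
    with 1 have "Liminf sequentially (\<lambda>n. ereal (prob_n B \<mu> n (?ordered n)))
        \<le> Liminf sequentially (\<lambda>n. ereal (prob_n B \<mu> n (?covered n)))"
      unfolding mem_conf_set_iff
      by (intro centered_errors.Liminf_prob_n_mono[OF errors]
          covered_measurable[unfolded mem_conf_set_iff]) blast
    moreover have "ereal (1 - \<alpha>) \<le> ereal (1 - \<alpha> / 2)"
      using alpha by simp
    ultimately show ?thesis
      using \<theta>_cov by order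
  next
    case 2
    define S where "S = prec \<theta> v"
    have "S \<subseteq> UNIV - {u, v}"
      using 2 by (auto simp: S_def prec_def)
    moreover have "valid_adjustment B \<mu> u v S"
      unfolding S_def using causal_ordering_inj[OF \<theta>] err_var
      by (intro centered_errors.valid_adjustment_prec[OF errors lower]) auto
    ultimately have S_cov: "ereal (1 - \<alpha> / 2)
        \<le> Liminf sequentially (\<lambda>n. ereal (prob_n B \<mu> n (\<lambda>\<omega>. ?\<pi> \<in> C n S \<omega>)))"
      using C_cov by simp
    have "ereal (1 - \<alpha> / 2 + (1 - \<alpha> / 2) - 1)
        \<le> Liminf sequentially (\<lambda>n. ereal (prob_n B \<mu> n (?covered n)))"
      using meas_Theta meas_C \<open>S \<subseteq> _\<close> covered_measurable 2 unfolding mem_conf_set_iff S_def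
      by (intro centered_errors.Liminf_prob_n_conj[OF errors \<theta>_cov S_cov[unfolded S_def]]) blast+
    then show ?thesis by simp
  qed
qed

end
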